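(* Let $k\ge 0$ be an integer and let $T$ be a regular tournament of order $2k+1$ (every vertex has in-degree and out-degree equal to $k$). Then $\Delta(T)=k$. Furthermore, for any ordering $\sigma$ of $V(T)$, if $u$ and $v$ denote respectively the first and the last vertex of $\sigma$, then $d_\sigma(u)=d_\sigma(v)=k$.
   Context: A tournament is a digraph with exactly one arc between each pair of distinct vertices. An ordering $\sigma=\langle v_1,\dots,v_n\rangle$ of $V(T)$ is a linear order of the vertices; an arc $(v_i,v_j)$ is backward in $\sigma$ if $j<i$ and forward otherwise. For a vertex $v$, $d_\sigma(v)$ is the number of backward arcs of $\sigma$ incident to $v$ (as head or tail). $\Delta_\sigma(T)=\max_{v\in V(T)} d_\sigma(v)$, and the degreewidth of $T$ is $\Delta(T)=\min_\sigma \Delta_\sigma(T)$, the minimum over all orderings $\sigma$ of $V(T)$. *)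

theory Defs
  imports Main
begin

definition tournament :: "'a set \<Rightarrow> ('a \<Rightarrow> 'a \<Rightarrow> bool) \<Rightarrow> bool" where
  "tournament V A \<longleftrightarrow> finite V \<and>
     (\<forall>u v. A u v \<longrightarrow> u \<in> V \<and> v \<in> V) \<and>
     (\<forall>v. \<not> A v v) \<and>
     (\<forall>u\<in>V. \<forall>v\<in>V. u \<noteq> v \<longrightarrow> (A u v \<longleftrightarrow> \<not> A v u))"

definition out_degree :: "'a set \<Rightarrow> ('a \<Rightarrow> 'a \<Rightarrow> bool) \<Rightarrow> 'a \<Rightarrow> nat" where
  "out_degree V A v = card {w \<in> V. A v w}"

definition in_degree :: "'a set \<Rightarrow> ('a \<Rightarrow> 'a \<Rightarrow> bool) \<Rightarrow> 'a \<Rightarrow> nat" where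
  "in_degree V A v = card {w \<in> V. A w v}"

definition is_ordering :: "'a set \<Rightarrow> 'a list \<Rightarrow> bool" where
  "is_ordering V \<sigma> \<longleftrightarrow> distinct \<sigma> \<and> set \<sigma> = V"

definition backward :: "('a \<Rightarrow> 'a \<Rightarrow> bool) \<Rightarrow> 'a list \<Rightarrow> 'a \<Rightarrow> 'a \<Rightarrow> bool" where
  "backward A \<sigma> u v \<longleftrightarrow> A u v \<and>
     (\<exists>i j. i < length \<sigma> \<and> j < length \<sigma> \<and> \<sigma> ! i = u \<and> \<sigma> ! j = v \<and> j < i)"

definition back_deg :: "'a set \<Rightarrow> ('a \<Rightarrow> 'a \<Rightarrow> bool) \<Rightarrow> 'a list \<Rightarrow> 'a \<Rightarrow> nat" where
  "back_deg V A \<sigma> v =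
     card {(x, y). x \<in> V \<and> y \<in> V \<and> backward A \<sigma> x y \<and> (x = v \<or> y = v)}"

definition max_back_deg :: "'a set \<Rightarrow> ('a \<Rightarrow> 'a \<Rightarrow> bool) \<Rightarrow> 'a list \<Rightarrow> nat" where
  "max_back_deg V A \<sigma> = Max (back_deg V A \<sigma> ` V)"

definition degreewidth :: "'a set \<Rightarrow> ('a \<Rightarrow> 'a \<Rightarrow> bool) \<Rightarrow> nat" where
  "degreewidth V A = Min {max_back_deg V A \<sigma> | \<sigma>. is_ordering V \<sigma>}"

end

theory Submission
  imports Defs
begin

text \<open>In any ordering, the backward arcs at the first vertex are exactly its in-arcs and those
  at the last vertex are exactly its out-arcs; in a regular tournament both number \<open>k\<close>,
  so \<open>\<Delta>(T) \<ge> k\<close>. Conversely, take a median order, an ordering with the fewest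
  backward arcs. Moving a vertex \<open>v\<close> to the front leaves the backward arcs not at \<open>v\<close>
  unchanged and makes the in-arcs of \<open>v\<close> its only backward arcs; by minimality, \<open>v\<close> had at
  most \<open>d\<^sup>-(v) = k\<close> backward arcs before. Orderings are handled through injective rank
  functions \<open>p\<close>, an arc \<open>(x, y)\<close> being backward when \<open>p y < p x\<close>.\<close>

definition position :: "'a list \<Rightarrow> 'a \<Rightarrow> nat" where
  "position \<sigma> = the_inv_into {..<length \<sigma>} ((!) \<sigma>)"

lemma position_nth:
  assumes "distinct \<sigma>" "i < length \<sigma>"
  shows "position \<sigma> (\<sigma> ! i) = i"
  unfolding position_def using assms by (auto intro!: the_inv_into_f_f inj_on_nth)

lemma nth_position:
  assumes "distinct \<sigma>" "x \<in> set \<sigma>"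
  shows "position \<sigma> x < length \<sigma>" "\<sigma> ! position \<sigma> x = x"
  using assms position_nth by (fastforce simp: in_set_conv_nth)+

lemma backward_nth_iff:
  assumes "distinct \<sigma>" "i < length \<sigma>" "j < length \<sigma>"
  shows "backward A \<sigma> (\<sigma> ! i) (\<sigma> ! j) \<longleftrightarrow> A (\<sigma> ! i) (\<sigma> ! j) \<and> j < i"
  using assms unfolding backward_def by (auto simp: nth_eq_iff_index_eq)

lemma backward_iff_position:
  assumes "distinct \<sigma>" "x \<in> set \<sigma>" "y \<in> set \<sigma>"
  shows "backward A \<sigma> x y \<longleftrightarrow> A x y \<and> position \<sigma> y < position \<sigma> x"
proof -
  obtain i j where "i < length \<sigma>" "x = \<sigma> ! i" "j < length \<sigma>" "y = \<sigma> ! j"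
    using assms(2,3) by (metis in_set_conv_nth)
  then show ?thesis
    using assms(1) by (simp add: backward_nth_iff position_nth)
qed

definition backward_arcs :: "'a set \<Rightarrow> ('a \<Rightarrow> 'a \<Rightarrow> bool) \<Rightarrow> ('a \<Rightarrow> 'b::ord) \<Rightarrow> ('a \<times> 'a) set" where
  "backward_arcs V A p = {(x, y). x \<in> V \<and> y \<in> V \<and> A x y \<and> p y < p x}"

definition incident :: "'a \<Rightarrow> ('a \<times> 'a) set" where
  "incident v = {(x, y). x = v \<or> y = v}"

lemma back_deg_eq_card_backward_incident:
  assumes "is_ordering V \<sigma>"
  shows "back_deg V A \<sigma> v = card (backward_arcs V A (position \<sigma>) \<inter> incident v)"
proof -
  have "backward A \<sigma> x y \<longleftrightarrow> A x y \<and> position \<sigma> y < position \<sigma> x" if "x \<in> V" "y \<in> V" for x y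
    using assms that backward_iff_position[of \<sigma> x y A] unfolding is_ordering_def by simp
  then show ?thesis
    unfolding back_deg_def incident_def backward_arcs_def
    by (intro arg_cong[where f = card]) auto
qed

lemma card_backward_incident_rank_min:
  fixes p :: "'a \<Rightarrow> 'b::order"
  assumes "v \<in> V" "\<not> A v v" "\<forall>x\<in>V. x \<noteq> v \<longrightarrow> p v < p x"
  shows "card (backward_arcs V A p \<inter> incident v) = in_degree V A v"
proof -
  have "backward_arcs V A p \<inter> incident v = (\<lambda>x. (x, v)) ` {w \<in> V. A w v}"
    using assms unfolding incident_def backward_arcs_def by fastforce
  then show ?thesis
    unfolding in_degree_def by (simp add: card_image inj_on_def)
qed

lemma card_backward_incident_rank_max:
  fixes p :: "'a \<Rightarrow> 'b::order"
  assumes "v \<in> V" "\<not> A v v" "\<forall>x\<in>V. x \<noteq> v \<longrightarrow> p x < p v"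
  shows "card (backward_arcs V A p \<inter> incident v) = out_degree V A v"
proof -
  have "backward_arcs V A p \<inter> incident v = Pair v ` {w \<in> V. A v w}"
    using assms unfolding incident_def backward_arcs_def by fastforce
  then show ?thesis
    unfolding out_degree_def by (simp add: card_image inj_on_def)
qed

lemma back_deg_hd:
  assumes "is_ordering V \<sigma>" "\<sigma> \<noteq> []" "irreflp A"
  shows "back_deg V A \<sigma> (hd \<sigma>) = in_degree V A (hd \<sigma>)"
proof -
  have \<sigma>: "distinct \<sigma>" "set \<sigma> = V" "hd \<sigma> = \<sigma> ! 0"
    using assms(1,2) unfolding is_ordering_def by (simp_all add: hd_conv_nth)
  have "position \<sigma> (hd \<sigma>) < position \<sigma> x" if "x \<in> V" "x \<noteq> hd \<sigma>" for x
    using that \<sigma> assms(2) nth_position[of \<sigma> x] position_nth[of \<sigma> 0] by (metis gr0I length_greater_0_conv)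
  then show ?thesis
    using assms \<sigma> back_deg_eq_card_backward_incident card_backward_incident_rank_min
    by (metis hd_in_set irreflp_def)
qed

lemma back_deg_last:
  assumes "is_ordering V \<sigma>" "\<sigma> \<noteq> []" "irreflp A"
  shows "back_deg V A \<sigma> (last \<sigma>) = out_degree V A (last \<sigma>)"
proof -
  have \<sigma>: "distinct \<sigma>" "set \<sigma> = V" "last \<sigma> = \<sigma> ! (length \<sigma> - 1)"
    using assms(1,2) unfolding is_ordering_def by (simp_all add: last_conv_nth)
  have "position \<sigma> x < position \<sigma> (last \<sigma>)" if "x \<in> V" "x \<noteq> last \<sigma>" for x
  proof -
    have "position \<sigma> x < length \<sigma>" "position \<sigma> x \<noteq> length \<sigma> - 1"
      using that \<sigma> nth_position[of \<sigma> x] by auto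
    moreover have "position \<sigma> (last \<sigma>) = length \<sigma> - 1"
      using \<sigma> assms(2) position_nth[of \<sigma> "length \<sigma> - 1"] by simp
    ultimately show ?thesis by linarith
  qed
  then show ?thesis
    using assms \<sigma> back_deg_eq_card_backward_incident card_backward_incident_rank_max
    by (metis last_in_set irreflp_def)
qed

lemma finite_backward_arcs: "finite V \<Longrightarrow> finite (backward_arcs V A p)"
  by (rule finite_subset[of _ "V \<times> V"]) (auto simp: backward_arcs_def)

definition median_rank :: "'a set \<Rightarrow> ('a \<Rightarrow> 'a \<Rightarrow> bool) \<Rightarrow> ('a \<Rightarrow> nat) \<Rightarrow> bool" where
  "median_rank V A p \<longleftrightarrow> inj_on p V \<and>
     (\<forall>q :: 'a \<Rightarrow> nat. inj_on q V \<longrightarrow> card (backward_arcs V A p) \<le> card (backward_arcs V A q))"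

lemma ex_median_rank:
  assumes "finite V"
  obtains p where "median_rank V A p"
proof -
  obtain p0 :: "'a \<Rightarrow> nat" and n where "inj_on p0 V"
    using finite_imp_inj_to_nat_seg[OF assms] by blast
  then show ?thesis
    using that ex_has_least_nat[of "\<lambda>p. inj_on p V" p0 "\<lambda>p. card (backward_arcs V A p)"]
    unfolding median_rank_def by blast
qed

lemma median_rank_card_backward_incident_le_in_degree:
  assumes "finite V" "median_rank V A p" "v \<in> V" "\<not> A v v"
  shows "card (backward_arcs V A p \<inter> incident v) \<le> in_degree V A v"
proof -
  define q where "q x = (if x = v then 0 else Suc (p x))" for x
  have "inj_on q V"
    using assms(2) unfolding median_rank_def q_def inj_on_def by auto
  then have "card (backward_arcs V A p) \<le> card (backward_arcs V A q)"
    using assms(2) unfolding median_rank_def by blast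
  moreover have split: "card (backward_arcs V A r) =
      card (backward_arcs V A r \<inter> incident v) + card (backward_arcs V A r - incident v)" for r
    using card_Int_Diff[OF finite_backward_arcs[OF assms(1)]] .
  moreover have "card (backward_arcs V A q - incident v) = card (backward_arcs V A p - incident v)"
    unfolding q_def incident_def backward_arcs_def by (intro arg_cong[where f = card]) auto
  moreover have "card (backward_arcs V A q \<inter> incident v) = in_degree V A v"
    using assms(3,4) by (intro card_backward_incident_rank_min) (auto simp: q_def)
  ultimately show ?thesis
    using split[of p] split[of q] by linarith
qed

lemma ex_ordering_sorted_by:
  fixes p :: "'a \<Rightarrow> 'b::linorder"
  assumes "finite V" "inj_on p V"
  obtains \<sigma> where "is_ordering V \<sigma>"
    "\<forall>x\<in>V. \<forall>y\<in>V. position \<sigma> x < position \<sigma> y \<longleftrightarrow> p x < p y"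
proof -
  obtain xs where xs: "set xs = V" "distinct xs"
    using finite_distinct_list[OF assms(1)] by blast
  define \<sigma> where "\<sigma> = sort_key p xs"
  have \<sigma>: "set \<sigma> = V" "distinct \<sigma>"
    using xs by (simp_all add: \<sigma>_def)
  have "sorted_wrt (<) (map p \<sigma>)"
    using \<sigma> assms(2) by (simp add: strict_sorted_iff distinct_map \<sigma>_def)
  then have mono: "p (\<sigma> ! i) < p (\<sigma> ! j)" if "i < j" "j < length \<sigma>" for i j
    using that sorted_wrt_nth_less by fastforce
  have "position \<sigma> x < position \<sigma> y \<longleftrightarrow> p x < p y" if "x \<in> V" "y \<in> V" for x y
    using mono[of "position \<sigma> x" "position \<sigma> y"] mono[of "position \<sigma> y" "position \<sigma> x"]
      nth_position[of \<sigma> x] nth_position[of \<sigma> y] \<sigma> that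
    by (metis less_asym linorder_neqE_nat)
  then show ?thesis
    using that \<sigma> unfolding is_ordering_def by blast
qed

lemma ex_ordering_back_deg_le_in_degree:
  assumes "finite V" "irreflp A"
  obtains \<sigma> where "is_ordering V \<sigma>" "\<And>v. v \<in> V \<Longrightarrow> back_deg V A \<sigma> v \<le> in_degree V A v"
proof -
  obtain p where p: "median_rank V A p"
    using ex_median_rank[OF assms(1)] by blast
  then obtain \<sigma> where \<sigma>: "is_ordering V \<sigma>"
    and pos: "\<forall>x\<in>V. \<forall>y\<in>V. position \<sigma> x < position \<sigma> y \<longleftrightarrow> p x < p y"
    using ex_ordering_sorted_by[OF assms(1)] unfolding median_rank_def by blast
  have "backward_arcs V A (position \<sigma>) = backward_arcs V A p"
    using pos unfolding backward_arcs_def by auto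
  then have "back_deg V A \<sigma> v \<le> in_degree V A v" if "v \<in> V" for v
    using back_deg_eq_card_backward_incident[OF \<sigma>] median_rank_card_backward_incident_le_in_degree[OF assms(1) p that]
      assms(2) by (simp add: irreflp_def)
  with \<sigma> show ?thesis using that by blast
qed

lemma is_ordering_nonempty:
  assumes "is_ordering V \<sigma>" "V \<noteq> {}"
  shows "\<sigma> \<noteq> []" "hd \<sigma> \<in> V" "last \<sigma> \<in> V"
proof -
  show "\<sigma> \<noteq> []"
    using assms unfolding is_ordering_def by auto
  then show "hd \<sigma> \<in> V" "last \<sigma> \<in> V"
    using assms(1) unfolding is_ordering_def by auto
qed

lemma finite_orderings: "finite V \<Longrightarrow> finite {\<sigma>. is_ordering V \<sigma>}"
  by (rule finite_subset[OF _ finite_subset_distinct]) (auto simp: is_ordering_def)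

lemma degreewidth_eqI:
  assumes "finite V" "is_ordering V \<sigma>" "max_back_deg V A \<sigma> \<le> k"
    and "\<And>\<tau>. is_ordering V \<tau> \<Longrightarrow> k \<le> max_back_deg V A \<tau>"
  shows "degreewidth V A = k"
proof -
  have "{max_back_deg V A \<tau> | \<tau>. is_ordering V \<tau>} = max_back_deg V A ` {\<tau>. is_ordering V \<tau>}"
    by blast
  then have "finite {max_back_deg V A \<tau> | \<tau>. is_ordering V \<tau>}"
    using finite_orderings[OF assms(1)] by simp
  moreover have "max_back_deg V A \<sigma> = k"
    using assms(2-4) by (simp add: le_antisym)
  ultimately show ?thesis
    unfolding degreewidth_def using assms by (intro Min_eqI) auto
qed

theorem mainTheorem1:
  fixes V :: "'a set" and A :: "'a \<Rightarrow> 'a \<Rightarrow> bool" and k :: nat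
  assumes "tournament V A"
    and "card V = 2 * k + 1"
    and "\<forall>v\<in>V. in_degree V A v = k \<and> out_degree V A v = k"
  shows "degreewidth V A = k \<and>
    (\<forall>\<sigma>. is_ordering V \<sigma> \<longrightarrow>
       back_deg V A \<sigma> (hd \<sigma>) = k \<and> back_deg V A \<sigma> (last \<sigma>) = k)"
proof -
  have fin: "finite V" and irrefl: "irreflp A"
    using assms(1) unfolding tournament_def irreflp_def by blast+
  have ne: "V \<noteq> {}"
    using assms(2) by auto
  have ends: "back_deg V A \<sigma> (hd \<sigma>) = k \<and> back_deg V A \<sigma> (last \<sigma>) = k"
    if "is_ordering V \<sigma>" for \<sigma>
    using back_deg_hd[OF that _ irrefl] back_deg_last[OF that _ irrefl]
      is_ordering_nonempty[OF that ne] assms(3) by simp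
  have "k \<le> max_back_deg V A \<tau>" if "is_ordering V \<tau>" for \<tau>
    using ends[OF that] is_ordering_nonempty[OF that ne] fin unfolding max_back_deg_def
    by (metis Max_ge finite_imageI imageI)
  moreover obtain \<sigma> where "is_ordering V \<sigma>" "\<And>v. v \<in> V \<Longrightarrow> back_deg V A \<sigma> v \<le> k"
    using ex_ordering_back_deg_le_in_degree[OF fin irrefl] assms(3) by metis
  moreover from this have "max_back_deg V A \<sigma> \<le> k"
    unfolding max_back_deg_def using fin ne by simp
  ultimately show ?thesis
    using degreewidth_eqI[OF fin] ends by blast
qed

end
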